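(* Let $0\le x\le1$, $0\le y\le1$ and $0<\alpha<\infty$. Then $$\sqrt{xy}+\sqrt{(1-x)(1-y)}\le 1+\frac12(\alpha-1)x+\frac12\Big(\frac1\alpha-1\Big)y.$$ *)

theory Defs
  imports Complex_Main
begin

end

theory Submission
  imports Defs
begin

text \<open>Apply AM-GM to each square root, after rescaling the first product as
  \<open>x y = (\<alpha> x) (y / \<alpha>)\<close>; the two bounds add up to the right-hand side exactly.\<close>

theorem lemma1:
  fixes x y \<alpha> :: real
  assumes "0 \<le> x" "x \<le> 1" "0 \<le> y" "y \<le> 1" "0 < \<alpha>"
  shows "sqrt (x * y) + sqrt ((1 - x) * (1 - y))
           \<le> 1 + (1/2) * (\<alpha> - 1) * x + (1/2) * (1 / \<alpha> - 1) * y"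
proof -
  have "x * y = (\<alpha> * x) * (y / \<alpha>)"
    using assms by simp
  moreover have "sqrt ((\<alpha> * x) * (y / \<alpha>)) \<le> (\<alpha> * x + y / \<alpha>) / 2"
    using assms by (intro arith_geo_mean_sqrt) auto
  ultimately have first: "sqrt (x * y) \<le> (\<alpha> * x + y / \<alpha>) / 2"
    by simp
  have second: "sqrt ((1 - x) * (1 - y)) \<le> ((1 - x) + (1 - y)) / 2"
    using assms by (intro arith_geo_mean_sqrt) auto
  have "(\<alpha> * x + y / \<alpha>) / 2 + ((1 - x) + (1 - y)) / 2
          = 1 + (1/2) * (\<alpha> - 1) * x + (1/2) * (1 / \<alpha> - 1) * y"
    using assms by (simp add: field_simps)
  with first second show ?thesis
    by linarith
qed

end
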